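(* Fix $a\in(1/2,1)$. There exist constants $c_a>0$ and $k_a$ (depending only on $a$) such that for all integers $k\ge k_a$, all $\varepsilon\in(0,1)$ and all $\delta\in(0,1/4)$, the $(\varepsilon,\delta)$-sample complexity of estimating the power sum $P_a(\vec p)=\sum_{i=1}^k p_i^a$ over $\Delta_k$ satisfies \[ C_{P_a}(\varepsilon,\delta)\ge c_a\,\log\frac1\delta\cdot\frac{k^{2-2a}}{\varepsilon^2}. \]
   Context: $\Delta_k$ is the set of probability distributions $\vec p=(p_1,\dots,p_k)$ on $[k]=\{1,\dots,k\}$; $\log$ is the natural logarithm. An estimator is any map $\hat f:[k]^*\to\mathbb{R}$ from finite sequences over $[k]$. For a property $f:\Delta_k\to\mathbb{R}$, the $(\varepsilon,\delta)$-sample complexity is \[ C_f(\varepsilon,\delta):=\min_{\hat f}\min\{n:\ \Pr_{X^n\sim\vec p}(|\hat f(X^n)-f(\vec p)|>\varepsilon)\le\delta\ \ \forall\vec p\in\Delta_k\}, \] where $X^n$ denotes $n$ i.i.d. samples from $\vec p$. *)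

theory Defs
  imports Complex_Main "HOL-Library.Extended_Nat" "HOL-Library.Extended_Real"
begin

definition simplex :: "nat \<Rightarrow> (nat \<Rightarrow> real) set" where
  "simplex k = {p. (\<forall>i\<in>{1..k}. 0 \<le> p i) \<and> (\<forall>i. i \<notin> {1..k} \<longrightarrow> p i = 0)
                   \<and> (\<Sum>i=1..k. p i) = 1}"

definition seqs :: "nat \<Rightarrow> nat \<Rightarrow> nat list set" where
  "seqs k n = {xs. length xs = n \<and> set xs \<subseteq> {1..k}}"

definition err_prob :: "nat \<Rightarrow> (nat \<Rightarrow> real) \<Rightarrow> (nat list \<Rightarrow> real) \<Rightarrow> ((nat \<Rightarrow> real) \<Rightarrow> real)
                        \<Rightarrow> real \<Rightarrow> nat \<Rightarrow> real" where
  "err_prob k p est f eps n =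
     (\<Sum>xs\<in>{xs\<in>seqs k n. \<bar>est xs - f p\<bar> > eps}. prod_list (map p xs))"

definition good_estimator :: "nat \<Rightarrow> ((nat \<Rightarrow> real) \<Rightarrow> real) \<Rightarrow> real \<Rightarrow> real
                              \<Rightarrow> (nat list \<Rightarrow> real) \<Rightarrow> nat \<Rightarrow> bool" where
  "good_estimator k f eps delta est n = (\<forall>p\<in>simplex k. err_prob k p est f eps n \<le> delta)"

text \<open>(eps,delta)-sample complexity; infinite if no estimator/sample size works.\<close>
definition sample_complexity :: "nat \<Rightarrow> ((nat \<Rightarrow> real) \<Rightarrow> real) \<Rightarrow> real \<Rightarrow> real \<Rightarrow> enat" where
  "sample_complexity k f eps delta =
     Inf {enat n | n est. good_estimator k f eps delta est n}"

definition power_sum :: "real \<Rightarrow> nat \<Rightarrow> (nat \<Rightarrow> real) \<Rightarrow> real" where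
  "power_sum a k p = (\<Sum>i=1..k. p i powr a)"

end

theory Submission imports Defs "HOL-Analysis.Convex" begin

text \<open>Two-point method. Let p put mass 1/2 on the first symbol and spread the rest uniformly
  over the other k - 1 symbols, and let q do the same with 1/2 + h, where h = 24 eps / k^(1-a).
  Concavity of x^a makes the power sums of p and q differ by about h k^(1-a), i.e. by more
  than 2 eps, so a good estimator yields a test that errs with probability at most delta under
  both p^n and q^n. Such a test forces the Bhattacharyya coefficient of p^n and q^n, which is
  the n-th power of that of p and q, to be at most 2 sqrt(delta (1 - delta)); since the latter
  coefficient is at least sqrt(1 - 2 h^2), taking logarithms gives n >= ln(1/delta) / (32 h^2).\<close>

lemma seqs_0: "seqs k 0 = {[]}"
  by (auto simp: seqs_def)

lemma seqs_Suc: "seqs k (Suc n) = (\<lambda>(x, xs). x # xs) ` ({1..k} \<times> seqs k n)"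
proof (rule set_eqI)
  fix ys
  show "ys \<in> seqs k (Suc n) \<longleftrightarrow> ys \<in> (\<lambda>(x, xs). x # xs) ` ({1..k} \<times> seqs k n)"
    by (cases ys) (auto simp: seqs_def)
qed

lemma finite_seqs: "finite (seqs k n)"
  by (induction n) (auto simp: seqs_0 seqs_Suc)

lemma sum_prod_list_seqs:
  "(\<Sum>xs\<in>seqs k n. prod_list (map (w :: nat \<Rightarrow> real) xs)) = (\<Sum>i=1..k. w i) ^ n"
proof (induction n)
  case 0
  then show ?case by (simp add: seqs_0)
next
  case (Suc n)
  have inj: "inj_on (\<lambda>(x, xs). x # xs) ({1..k} \<times> seqs k n)"
    by (auto simp: inj_on_def)
  have "(\<Sum>xs\<in>seqs k (Suc n). prod_list (map w xs))
      = (\<Sum>(x, xs)\<in>{1..k} \<times> seqs k n. w x * prod_list (map w xs))"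
    unfolding seqs_Suc by (subst sum.reindex[OF inj]) (simp add: case_prod_beta)
  also have "\<dots> = (\<Sum>x=1..k. w x) * (\<Sum>xs\<in>seqs k n. prod_list (map w xs))"
    by (simp add: sum.cartesian_product[symmetric] sum_product)
  finally show ?case using Suc by simp
qed

lemma prod_list_nonneg_seqs:
  assumes "xs \<in> seqs k n" and "\<forall>i\<in>{1..k}. 0 \<le> (p :: nat \<Rightarrow> real) i"
  shows "0 \<le> prod_list (map p xs)"
  using assms by (induction xs arbitrary: n) (auto simp: seqs_def)

lemma sqrt_prod_list_mult:
  "sqrt (prod_list (map p xs) * prod_list (map q xs)) = prod_list (map (\<lambda>i. sqrt (p i * q i)) xs)"
  by (induction xs) (auto simp: real_sqrt_mult)

section \<open>The Bhattacharyya coefficient and tests\<close>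

definition bhattacharyya :: "nat \<Rightarrow> (nat \<Rightarrow> real) \<Rightarrow> (nat \<Rightarrow> real) \<Rightarrow> real" where
  "bhattacharyya k p q = (\<Sum>i=1..k. sqrt (p i * q i))"

lemma sum_sqrt_mult_sq_le:
  fixes P Q :: "'a \<Rightarrow> real"
  assumes "\<And>x. x \<in> A \<Longrightarrow> 0 \<le> P x" and "\<And>x. x \<in> A \<Longrightarrow> 0 \<le> Q x"
  shows "(\<Sum>x\<in>A. sqrt (P x * Q x))^2 \<le> (\<Sum>x\<in>A. P x) * (\<Sum>x\<in>A. Q x)"
proof -
  have "(\<Sum>x\<in>A. sqrt (P x * Q x))^2 = (\<Sum>x\<in>A. sqrt (P x) * sqrt (Q x))^2"
    by (simp add: real_sqrt_mult)
  also have "\<dots> \<le> (\<Sum>x\<in>A. (sqrt (P x))^2) * (\<Sum>x\<in>A. (sqrt (Q x))^2)"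
    by (rule Cauchy_Schwarz_ineq_sum)
  also have "\<dots> = (\<Sum>x\<in>A. P x) * (\<Sum>x\<in>A. Q x)"
    using assms by (simp cong: sum.cong)
  finally show ?thesis .
qed

lemma sum_sq_le_of_errors:
  fixes X Y u v \<delta> :: real
  assumes "0 \<le> X" "0 \<le> Y" "X^2 \<le> u * (1 - v)" "Y^2 \<le> (1 - u) * v"
    and "0 \<le> u" "u \<le> \<delta>" "0 \<le> v" "v \<le> \<delta>" "\<delta> \<le> 1/2"
  shows "(X + Y)^2 \<le> 4 * \<delta> * (1 - \<delta>)"
proof -
  have "(X + Y)^2 \<le> 2 * (X^2 + Y^2)"
    using power2_eq_square[of "X - Y"] sum_squares_ge_zero[of "X - Y" 0]
    by (simp add: power2_eq_square algebra_simps)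
  also have "\<dots> \<le> 2 * (u + v - 2 * u * v)"
    using assms(3,4) by (simp add: algebra_simps)
  also have "\<dots> \<le> 4 * \<delta> * (1 - \<delta>)"
  proof -
    \<comment> \<open>u + v - 2 u v is monotone in u and in v on [0, 1/2]\<close>
    have "2 * \<delta> - 2 * \<delta>^2 - (u + v - 2 * u * v) = (\<delta> - u) * (1 - 2 * v) + (\<delta> - v) * (1 - 2 * \<delta>)"
      by (simp add: power2_eq_square algebra_simps)
    moreover have "0 \<le> (\<delta> - u) * (1 - 2 * v) + (\<delta> - v) * (1 - 2 * \<delta>)"
      using assms by (intro add_nonneg_nonneg mult_nonneg_nonneg) auto
    ultimately show ?thesis by (simp add: power2_eq_square algebra_simps)
  qed
  finally show ?thesis .
qed

lemma bhattacharyya_sq_le_of_test: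
  fixes P Q :: "'a \<Rightarrow> real"
  assumes S: "finite S" and P0: "\<And>x. x \<in> S \<Longrightarrow> 0 \<le> P x" and Q0: "\<And>x. x \<in> S \<Longrightarrow> 0 \<le> Q x"
    and P1: "(\<Sum>x\<in>S. P x) = 1" and Q1: "(\<Sum>x\<in>S. Q x) = 1"
    and A: "A \<subseteq> S" and PA: "(\<Sum>x\<in>A. P x) \<le> \<delta>" and QA: "(\<Sum>x\<in>S - A. Q x) \<le> \<delta>"
    and \<delta>: "\<delta> \<le> 1/2"
  shows "(\<Sum>x\<in>S. sqrt (P x * Q x))^2 \<le> 4 * \<delta> * (1 - \<delta>)"
proof -
  define B where "B = S - A"
  have fin: "finite A" "finite B" and disj: "A \<inter> B = {}" and S_eq: "S = A \<union> B"
    using S A finite_subset unfolding B_def by auto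
  have sum_split: "(\<Sum>x\<in>S. f x) = (\<Sum>x\<in>A. f x) + (\<Sum>x\<in>B. f x)" for f :: "'a \<Rightarrow> real"
    unfolding S_eq by (rule sum.union_disjoint[OF fin disj])
  define u where "u = (\<Sum>x\<in>A. P x)"
  define v where "v = (\<Sum>x\<in>B. Q x)"
  have u: "0 \<le> u" "u \<le> \<delta>" and v: "0 \<le> v" "v \<le> \<delta>"
    using P0 Q0 A PA QA unfolding u_def v_def B_def by (auto intro!: sum_nonneg)
  have "(\<Sum>x\<in>A. sqrt (P x * Q x))^2 \<le> u * (1 - v)"
  proof -
    have "(\<Sum>x\<in>A. Q x) = 1 - v"
      using Q1 sum_split[of Q] unfolding v_def by simp
    then show ?thesis
      using sum_sqrt_mult_sq_le[of A P Q] P0 Q0 A unfolding u_def by auto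
  qed
  moreover have "(\<Sum>x\<in>B. sqrt (P x * Q x))^2 \<le> (1 - u) * v"
  proof -
    have "(\<Sum>x\<in>B. P x) = 1 - u"
      using P1 sum_split[of P] unfolding u_def by simp
    then show ?thesis
      using sum_sqrt_mult_sq_le[of B P Q] P0 Q0 unfolding v_def B_def by auto
  qed
  then have "((\<Sum>x\<in>A. sqrt (P x * Q x)) + (\<Sum>x\<in>B. sqrt (P x * Q x)))^2 \<le> 4 * \<delta> * (1 - \<delta>)"
    using \<open>(\<Sum>x\<in>A. sqrt (P x * Q x))^2 \<le> u * (1 - v)\<close> u v \<delta> P0 Q0 A
    unfolding B_def by (intro sum_sq_le_of_errors[of _ _ u v \<delta>]) (auto intro!: sum_nonneg)
  then show ?thesis
    using sum_split[of "\<lambda>x. sqrt (P x * Q x)"] by simp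
qed

lemma bhattacharyya_pow_le_of_good_estimator:
  assumes good: "good_estimator k f eps \<delta> est n"
    and p: "p \<in> simplex k" and q: "q \<in> simplex k"
    and gap: "2 * eps < \<bar>f p - f q\<bar>" and \<delta>: "\<delta> \<le> 1/2"
  shows "bhattacharyya k p q ^ (2 * n) \<le> 4 * \<delta> * (1 - \<delta>)"
proof -
  define P where "P xs = prod_list (map p xs)" for xs
  define Q where "Q xs = prod_list (map q xs)" for xs
  define A where "A = {xs \<in> seqs k n. eps < \<bar>est xs - f p\<bar>}"
  have pq: "\<forall>i\<in>{1..k}. 0 \<le> p i" "\<forall>i\<in>{1..k}. 0 \<le> q i" "(\<Sum>i=1..k. p i) = 1" "(\<Sum>i=1..k. q i) = 1"
    using p q by (auto simp: simplex_def)
  \<comment> \<open>a sequence accepted for p is rejected for q, as the two targets are 2 eps apart\<close>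
  have "seqs k n - A \<subseteq> {xs \<in> seqs k n. eps < \<bar>est xs - f q\<bar>}"
    unfolding A_def using gap by auto
  then have "(\<Sum>xs\<in>seqs k n - A. Q xs) \<le> err_prob k q est f eps n"
    unfolding err_prob_def Q_def
    by (intro sum_mono2) (auto simp: finite_seqs intro: prod_list_nonneg_seqs[OF _ pq(2)])
  also have "\<dots> \<le> \<delta>"
    using good q by (simp add: good_estimator_def)
  finally have QA: "(\<Sum>xs\<in>seqs k n - A. Q xs) \<le> \<delta>" .
  have PA: "(\<Sum>xs\<in>A. P xs) \<le> \<delta>"
    using good p unfolding good_estimator_def err_prob_def A_def P_def by simp
  have "(\<Sum>xs\<in>seqs k n. sqrt (P xs * Q xs))^2 \<le> 4 * \<delta> * (1 - \<delta>)"
    using finite_seqs prod_list_nonneg_seqs pq PA QA \<delta>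
    by (intro bhattacharyya_sq_le_of_test) (auto simp: A_def P_def Q_def sum_prod_list_seqs)
  moreover have "(\<Sum>xs\<in>seqs k n. sqrt (P xs * Q xs)) = bhattacharyya k p q ^ n"
    unfolding P_def Q_def sqrt_prod_list_mult sum_prod_list_seqs bhattacharyya_def ..
  ultimately show ?thesis
    by (simp add: power_mult mult.commute[of 2 n])
qed

lemma ln_four_mult_le:
  fixes d :: real
  assumes "0 < d" "d < 1/4"
  shows "ln (4 * d * (1 - d)) \<le> - ln (1/d) / 8"
proof -
  have ln8: "ln 8 = 3 * ln (2::real)" and ln4: "ln 4 = 2 * ln (2::real)"
    using ln_realpow[of 2 3] ln_realpow[of 2 2] by simp_all
  have ln_inv: "ln (1/d) = - ln d"
    using assms by (simp add: ln_div)
  show ?thesis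
  proof (cases "d \<le> 1/8")
    case True
    have "ln 8 \<le> ln (1/d)"
      using True assms by (subst ln_le_cancel_iff) (auto simp: field_simps)
    moreover have "ln (4 * d * (1 - d)) \<le> ln (4 * d)"
      using assms by (subst ln_le_cancel_iff) auto
    moreover have "ln (4 * d) = 2 * ln 2 + ln d"
      using assms by (simp add: ln_mult ln4)
    ultimately show ?thesis
      using ln_inv ln8 ln_gt_zero[of "2::real"] by linarith
  next
    case False
    have "ln (1/d) \<le> ln 8"
      using False assms by (subst ln_le_cancel_iff) (auto simp: field_simps)
    have "4 * d * (1 - d) = 3/4 - 4 * ((1/4 - d) * (3/4 - d))"
      by (simp add: field_simps)
    moreover have "0 \<le> (1/4 - d) * (3/4 - d)"
      using assms by (intro mult_nonneg_nonneg) auto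
    moreover have "0 < 4 * d * (1 - d)"
      using assms by simp
    ultimately have "ln (4 * d * (1 - d)) \<le> ln (3/4)"
      by (subst ln_le_cancel_iff) auto
    moreover have "ln (2^3) \<le> ln ((4/3::real)^8)"
      by (subst ln_le_cancel_iff) (auto simp: power_divide)
    then have "3 * ln 2 \<le> 8 * ln (4/3::real)"
      using ln8 by (simp add: ln_realpow)
    moreover have "ln (3/4::real) = - ln (4/3)"
      by (simp add: ln_div)
    ultimately show ?thesis
      using \<open>ln (1/d) \<le> ln 8\<close> ln8 by linarith
  qed
qed

lemma ln_inverse_le_of_pow_le:
  fixes h B d :: real
  assumes h: "\<bar>h\<bar> \<le> 1/4" and B: "1 - 2 * h^2 \<le> B" and Bn: "B ^ n \<le> 4 * d * (1 - d)"
    and d: "0 < d" "d < 1/4"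
  shows "ln (1/d) \<le> 32 * real n * h^2"
proof -
  have h2: "h^2 \<le> 1/16"
    using h power_mono[of "\<bar>h\<bar>" "1/4" 2] by (simp add: power2_eq_square)
  have "- (2 * h^2) - 2 * (2 * h^2)^2 \<le> ln (1 - 2 * h^2)"
    using ln_one_minus_pos_lower_bound[of "2 * h^2"] h2 by simp
  moreover have "2 * (2 * h^2)^2 \<le> 2 * h^2"
  proof -
    have "h^2 * (8 * h^2) \<le> h^2 * 2"
      using h2 by (intro mult_left_mono) auto
    then show ?thesis
      by (simp add: power2_eq_square algebra_simps)
  qed
  moreover have "ln (1 - 2 * h^2) \<le> ln B"
    using B h2 by (subst ln_le_cancel_iff) auto
  ultimately have lnB: "- 4 * h^2 \<le> ln B"
    by linarith
  have "real n * ln B = ln (B ^ n)"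
    using B h2 by (simp add: ln_realpow)
  also have "\<dots> \<le> ln (4 * d * (1 - d))"
    using Bn B h2 d by (subst ln_le_cancel_iff) auto
  finally have "real n * (- 4 * h^2) \<le> ln (4 * d * (1 - d))"
    using mult_left_mono[OF lnB, of "real n"] by linarith
  then show ?thesis
    using ln_four_mult_le[OF d] by simp
qed

lemma ereal_le_sample_complexity:
  assumes "\<And>n est. good_estimator k f eps \<delta> est n \<Longrightarrow> B \<le> real n"
  shows "ereal B \<le> ereal_of_enat (sample_complexity k f eps \<delta>)"
proof -
  define S where "S = {enat n | n est. good_estimator k f eps \<delta> est n}"
  show ?thesis
  proof (cases "S = {}")
    case True
    then show ?thesis
      unfolding sample_complexity_def S_def[symmetric] by (simp add: top_enat_def)
  next
    case False
    then have "Inf S \<in> S"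
      unfolding Inf_enat_def by (auto intro: LeastI)
    then obtain n est where "Inf S = enat n" "good_estimator k f eps \<delta> est n"
      unfolding S_def by blast
    then show ?thesis
      unfolding sample_complexity_def S_def[symmetric] using assms by simp
  qed
qed

section \<open>The hard pair of distributions\<close>

definition spike_dist :: "nat \<Rightarrow> real \<Rightarrow> nat \<Rightarrow> real" where
  "spike_dist k x i = (if i = 1 then x else if 2 \<le> i \<and> i \<le> k then (1 - x) / (real k - 1) else 0)"

lemma sum_spike_dist:
  assumes "k \<ge> 2"
  shows "(\<Sum>i=1..k. H (spike_dist k x i) (spike_dist k y i))
       = H x y + (real k - 1) * H ((1 - x) / (real k - 1)) ((1 - y) / (real k - 1))"
proof -
  have "{1..k} = insert 1 {2..k}"
    using assms by auto
  then have "(\<Sum>i=1..k. H (spike_dist k x i) (spike_dist k y i))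
           = H x y + (\<Sum>i=2..k. H (spike_dist k x i) (spike_dist k y i))"
    by (simp add: spike_dist_def)
  also have "(\<Sum>i=2..k. H (spike_dist k x i) (spike_dist k y i))
           = (\<Sum>i=2..k. H ((1 - x) / (real k - 1)) ((1 - y) / (real k - 1)))"
    by (rule sum.cong) (auto simp: spike_dist_def)
  also have "\<dots> = (real k - 1) * H ((1 - x) / (real k - 1)) ((1 - y) / (real k - 1))"
    using assms by (simp add: of_nat_diff)
  finally show ?thesis .
qed

lemma spike_dist_in_simplex:
  assumes "k \<ge> 2" "0 \<le> x" "x \<le> 1"
  shows "spike_dist k x \<in> simplex k"
  using sum_spike_dist[OF assms(1), of "\<lambda>u v. u" x x] assms
  by (auto simp: simplex_def spike_dist_def)

lemma power_sum_spike_dist: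
  assumes "k \<ge> 2" "0 \<le> x" "x \<le> 1"
  shows "power_sum a k (spike_dist k x) = x powr a + (real k - 1) powr (1 - a) * (1 - x) powr a"
proof -
  have "power_sum a k (spike_dist k x) = x powr a + (real k - 1) * ((1 - x) / (real k - 1)) powr a"
    unfolding power_sum_def using sum_spike_dist[OF assms(1), of "\<lambda>u v. u powr a" x x] by simp
  also have "(real k - 1) * ((1 - x) / (real k - 1)) powr a = (real k - 1) powr (1 - a) * (1 - x) powr a"
    using assms by (simp add: powr_divide powr_diff)
  finally show ?thesis .
qed

lemma bhattacharyya_spike_dist:
  assumes "k \<ge> 2"
  shows "bhattacharyya k (spike_dist k x) (spike_dist k y) = sqrt (x * y) + sqrt ((1 - x) * (1 - y))"
proof -
  have "bhattacharyya k (spike_dist k x) (spike_dist k y)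
      = sqrt (x * y) + (real k - 1) * sqrt ((1 - x) / (real k - 1) * ((1 - y) / (real k - 1)))"
    unfolding bhattacharyya_def using sum_spike_dist[OF assms, of "\<lambda>u v. sqrt (u * v)" x y] by simp
  also have "(real k - 1) * sqrt ((1 - x) / (real k - 1) * ((1 - y) / (real k - 1))) = sqrt ((1 - x) * (1 - y))"
    using assms by (simp add: real_sqrt_mult real_sqrt_divide)
  finally show ?thesis .
qed

lemma bhattacharyya_half_sq_ge:
  fixes h :: real
  assumes "\<bar>h\<bar> \<le> 1/2"
  shows "1 - 2 * h^2 \<le> (sqrt (1/2 * (1/2 + h)) + sqrt ((1 - 1/2) * (1 - (1/2 + h))))^2"
proof -
  have h2: "h^2 \<le> 1/4"
    using assms power_mono[of "\<bar>h\<bar>" "1/2" 2] by (simp add: power2_eq_square)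
  have "h^2 * (4 * h^2) \<le> h^2 * 1"
    using h2 by (intro mult_left_mono) auto
  then have "(1/2 - 2 * h^2)^2 \<le> 1/4 - h^2"
    by (simp add: power2_eq_square algebra_simps)
  then have "1/2 - 2 * h^2 \<le> sqrt (1/4 - h^2)"
    by (rule real_le_rsqrt)
  moreover have "(sqrt (1/2 * (1/2 + h)) + sqrt ((1 - 1/2) * (1 - (1/2 + h))))^2
               = 1/2 + sqrt (1/4 - h^2)"
  proof -
    have "1/2 * (1/2 + h) * ((1 - 1/2) * (1 - (1/2 + h))) = (1/2)^2 * (1/4 - h^2)"
      by (simp add: power2_eq_square algebra_simps)
    then have "sqrt (1/2 * (1/2 + h)) * sqrt ((1 - 1/2) * (1 - (1/2 + h))) = sqrt (1/4 - h^2) / 2"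
      by (simp add: real_sqrt_mult[symmetric] real_sqrt_mult real_sqrt_abs)
    then show ?thesis
      using assms by (simp add: power2_sum abs_le_iff algebra_simps)
  qed
  ultimately show ?thesis
    by linarith
qed

lemma powr_le_tangent:
  fixes a x y :: real
  assumes "0 < a" "a < 1" "0 < x" "0 < y"
  shows "x powr a \<le> y powr a + a * y powr (a - 1) * (x - y)"
proof -
  have "(x/y) powr a * 1 powr (1 - a) \<le> a * (x/y) + (1 - a) * 1"
    using Youngs_inequality_0[of a "1 - a" "x/y" 1] assms by auto
  then have "x powr a \<le> (a * (x/y) + (1 - a)) * y powr a"
    using assms by (simp add: powr_divide divide_le_eq)
  also have "\<dots> = y powr a + a * (y powr a / y) * (x - y)"
    using assms by (simp add: field_simps)
  finally show ?thesis
    using assms by (simp add: powr_diff)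
qed

lemma power_sum_spike_dist_gap:
  assumes a: "0 < a" "a < 1" and k: "k \<ge> 2" and h: "0 < h" "h \<le> 1/4"
  shows "a * h * ((real k - 1) powr (1 - a) - 1)
       \<le> power_sum a k (spike_dist k (1/2)) - power_sum a k (spike_dist k (1/2 + h))"
proof -
  define M where "M = (real k - 1) powr (1 - a)"
  define g where "g = a * (1/2) powr (a - 1)"
  have M1: "1 \<le> M"
    unfolding M_def using k a by (simp add: ge_one_powr_ge_zero)
  have "(1/2::real) powr (a - 1) = 2 powr (1 - a)"
    by (simp add: powr_divide powr_minus_divide[symmetric])
  then have ga: "a \<le> g"
    unfolding g_def using a mult_left_mono[of 1 "2 powr (1 - a)" a] by (simp add: ge_one_powr_ge_zero)
  have "(1/2 + h) powr a \<le> (1/2) powr a + g * h"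
    using powr_le_tangent[of a "1/2 + h" "1/2"] a h unfolding g_def by simp
  moreover have "M * (1/2 - h) powr a \<le> M * ((1/2) powr a - g * h)"
    using powr_le_tangent[of a "1/2 - h" "1/2"] a h M1 unfolding g_def
    by (intro mult_left_mono) auto
  moreover have "a * h * (M - 1) \<le> g * h * (M - 1)"
    using ga h M1 by (intro mult_right_mono) auto
  moreover have "power_sum a k (spike_dist k (1/2)) = (1/2) powr a + M * (1/2) powr a"
    and "power_sum a k (spike_dist k (1/2 + h)) = (1/2 + h) powr a + M * (1/2 - h) powr a"
    using power_sum_spike_dist[OF k, of "1/2"] power_sum_spike_dist[OF k, of "1/2 + h"] h
    unfolding M_def by (simp_all add: algebra_simps)
  ultimately show ?thesis
    unfolding M_def[symmetric] by (simp add: algebra_simps)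
qed

lemma powr_diff_one_ge_half:
  assumes "k \<ge> 2" "0 \<le> b" "b \<le> 1"
  shows "real k powr b / 2 \<le> (real k - 1) powr b"
proof -
  have "2 powr b \<le> (2::real) powr 1"
    using assms by (intro powr_mono) auto
  then have "real k powr b / 2 \<le> real k powr b / 2 powr b"
    by (intro divide_left_mono) auto
  also have "\<dots> = (real k / 2) powr b"
    by (simp add: powr_divide)
  also have "\<dots> \<le> (real k - 1) powr b"
    using assms by (intro powr_mono2) auto
  finally show ?thesis .
qed

lemma power_sum_sample_size_ge:
  assumes a: "1/2 < a" "a < 1" and k: "k \<ge> 2" and K: "96 \<le> real k powr (1 - a)"
    and eps: "0 < eps" "eps < 1" and \<delta>: "0 < \<delta>" "\<delta> < 1/4"
    and good: "good_estimator k (power_sum a k) eps \<delta> est n"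
  shows "1/18432 * ln (1/\<delta>) * real k powr (2 - 2 * a) / eps^2 \<le> real n"
proof -
  define K where "K = real k powr (1 - a)"
  define h where "h = 24 * eps / K"
  have K0: "0 < K"
    using K k unfolding K_def by simp
  have h: "0 < h" "h \<le> 1/4"
    using K K0 eps unfolding h_def K_def by (auto simp: divide_le_eq)
  have p: "spike_dist k (1/2) \<in> simplex k" and q: "spike_dist k (1/2 + h) \<in> simplex k"
    using k h by (auto intro: spike_dist_in_simplex)
  have "K/4 \<le> (real k - 1) powr (1 - a) - 1"
    using powr_diff_one_ge_half[OF k, of "1 - a"] K a unfolding K_def by auto
  then have "1/2 * h * (K/4) \<le> a * h * ((real k - 1) powr (1 - a) - 1)"
    using a h K unfolding K_def by (intro mult_mono) auto
  moreover have "1/2 * h * (K/4) = 3 * eps"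
    using K0 unfolding h_def by simp
  ultimately have "2 * eps < \<bar>power_sum a k (spike_dist k (1/2)) - power_sum a k (spike_dist k (1/2 + h))\<bar>"
    using power_sum_spike_dist_gap[of a k h] a k h eps by linarith
  from bhattacharyya_pow_le_of_good_estimator[OF good p q this]
  have "((bhattacharyya k (spike_dist k (1/2)) (spike_dist k (1/2 + h)))^2) ^ n \<le> 4 * \<delta> * (1 - \<delta>)"
    using \<delta> by (simp add: power_mult)
  then have "ln (1/\<delta>) \<le> 32 * real n * h^2"
    using h \<delta> bhattacharyya_half_sq_ge[of h] bhattacharyya_spike_dist[OF k]
    by (intro ln_inverse_le_of_pow_le) auto
  also have "32 * real n * h^2 = 18432 * real n * eps^2 / K^2"
    unfolding h_def by (simp add: power_divide power_mult_distrib)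
  finally have "ln (1/\<delta>) * K^2 \<le> 18432 * real n * eps^2"
    using K0 by (simp add: le_divide_eq)
  moreover have "real k powr (2 - 2 * a) = K^2"
    unfolding K_def by (simp add: power2_eq_square powr_add[symmetric])
  ultimately show ?thesis
    using eps by (simp add: divide_le_eq)
qed

theorem theorem2:
  fixes a :: real
  assumes "1/2 < a" and "a < 1"
  shows "\<exists>c>0. \<exists>k0::nat. \<forall>k\<ge>k0. \<forall>eps delta::real.
           0 < eps \<and> eps < 1 \<and> 0 < delta \<and> delta < 1/4 \<longrightarrow>
           ereal (c * ln (1/delta) * real k powr (2 - 2*a) / eps^2)
             \<le> ereal_of_enat (sample_complexity k (power_sum a k) eps delta)"
proof (intro exI[of _ "1/18432"] conjI exI[of _ "nat \<lceil>96 powr (1/(1-a))\<rceil> + 2"] allI impI)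
  fix k :: nat and eps delta :: real
  assume k: "nat \<lceil>96 powr (1/(1-a))\<rceil> + 2 \<le> k"
    and ed: "0 < eps \<and> eps < 1 \<and> 0 < delta \<and> delta < 1/4"
  have "96 powr (1/(1-a)) \<le> real k"
    using k by linarith
  then have "(96 powr (1/(1-a))) powr (1-a) \<le> real k powr (1-a)"
    using assms by (intro powr_mono2) auto
  then have "96 \<le> real k powr (1-a)"
    using assms by (simp add: powr_powr)
  then show "ereal (1/18432 * ln (1/delta) * real k powr (2 - 2*a) / eps^2)
           \<le> ereal_of_enat (sample_complexity k (power_sum a k) eps delta)"
    using k ed by (intro ereal_le_sample_complexity power_sum_sample_size_ge[OF assms]) auto
qed simp

end
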